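(* Consider the two-layer multi-item order fulfillment problem described in the context with a single FDC ($K=1$). Let an algorithm produce a feasible plan $\{m_{k,t}^i\}$ with FDC inventories $I_{1,t}^i=I_{1,0}^i-\sum_{\tau\le t}m_{1,\tau}^i$, and let $\hat m_{1,t}^i=\min\{S_t^i,I_{1,t-1}^i\}$. Suppose that for every $i$ and $t$, either $m_{1,t}^i=\hat m_{1,t}^i$ or $m_{1,t}^i=0$. Let $\{m_{k,t}^{i,*}\}$ be an optimal offline plan. Fix an item $i$ and let $C_i=\{t:m_{1,t}^i>0\}$. Then for every set $B\subseteq[T]$ with $B\supseteq C_i$, \[\sum_{t\in B}\hat m_{1,t}^i\ \ge\ \sum_{t\in B}m_{1,t}^{i,*}.\]
   Context: Problem with one FDC (index $1$) and one RDC (index $0$, unlimited inventory). The FDC initially holds $I_{1,0}^i\ge0$ units of item $i\in[n]$, never replenished. In periods $t=1,\dots,T$ an order $\boldsymbol S_t=(S_t^i)_i$ of nonnegative integers arrives with variable costs $c_{k,t}^i$; a feasible plan chooses $m_{0,t}^i,m_{1,t}^i\ge0$ with $m_{0,t}^i+m_{1,t}^i=S_t^i$ and $\sum_{\tau\le t}m_{1,\tau}^i\le I_{1,0}^i$. The period cost is $\sum_{k=0,1}[f_k\mathbb{I}(\sum_im_{k,t}^i>0)+\sum_ic_{k,t}^im_{k,t}^i]$; an optimal offline plan minimizes total cost over all feasible plans with full knowledge of the instance. *)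

theory Defs
  imports Complex_Main
begin

text \<open>A plan is m k t i : units of item i in period t fulfilled from node k
  (k = 0: RDC, k = 1: FDC). Items are 1..n, periods 1..T.\<close>

definition feasible_plan ::
  "nat \<Rightarrow> nat \<Rightarrow> (nat \<Rightarrow> nat) \<Rightarrow> (nat \<Rightarrow> nat \<Rightarrow> nat)
   \<Rightarrow> (nat \<Rightarrow> nat \<Rightarrow> nat \<Rightarrow> nat) \<Rightarrow> bool" where
  "feasible_plan n T I0 S m \<longleftrightarrow>
     (\<forall>t\<in>{1..T}. \<forall>i\<in>{1..n}. m 0 t i + m 1 t i = S t i) \<and>
     (\<forall>t\<in>{1..T}. \<forall>i\<in>{1..n}. (\<Sum>\<tau>\<in>{1..t}. m 1 \<tau> i) \<le> I0 i)"

definition plan_cost ::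
  "nat \<Rightarrow> nat \<Rightarrow> (nat \<Rightarrow> real) \<Rightarrow> (nat \<Rightarrow> nat \<Rightarrow> nat \<Rightarrow> real)
   \<Rightarrow> (nat \<Rightarrow> nat \<Rightarrow> nat \<Rightarrow> nat) \<Rightarrow> real" where
  "plan_cost n T f c m =
     (\<Sum>t\<in>{1..T}. \<Sum>k\<in>{0,1::nat}.
        (f k * (if (\<Sum>i\<in>{1..n}. m k t i) > 0 then 1 else 0)
         + (\<Sum>i\<in>{1..n}. c k t i * real (m k t i))))"

definition optimal_offline_plan ::
  "nat \<Rightarrow> nat \<Rightarrow> (nat \<Rightarrow> nat) \<Rightarrow> (nat \<Rightarrow> nat \<Rightarrow> nat) \<Rightarrow> (nat \<Rightarrow> real)
   \<Rightarrow> (nat \<Rightarrow> nat \<Rightarrow> nat \<Rightarrow> real) \<Rightarrow> (nat \<Rightarrow> nat \<Rightarrow> nat \<Rightarrow> nat) \<Rightarrow> bool" where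
  "optimal_offline_plan n T I0 S f c m \<longleftrightarrow>
     feasible_plan n T I0 S m \<and>
     (\<forall>m'. feasible_plan n T I0 S m' \<longrightarrow> plan_cost n T f c m \<le> plan_cost n T f c m')"

definition fdc_inv :: "(nat \<Rightarrow> nat) \<Rightarrow> (nat \<Rightarrow> nat \<Rightarrow> nat \<Rightarrow> nat) \<Rightarrow> nat \<Rightarrow> nat \<Rightarrow> int" where
  "fdc_inv I0 m t i = int (I0 i) - (\<Sum>\<tau>\<in>{1..t}. int (m 1 \<tau> i))"

definition hat_m :: "(nat \<Rightarrow> nat) \<Rightarrow> (nat \<Rightarrow> nat \<Rightarrow> nat) \<Rightarrow> (nat \<Rightarrow> nat \<Rightarrow> nat \<Rightarrow> nat) \<Rightarrow> nat \<Rightarrow> nat \<Rightarrow> int" where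
  "hat_m I0 S m t i = min (int (S t i)) (fdc_inv I0 m (t - 1) i)"

end

theory Submission
  imports Defs
begin

text \<open>Any feasible plan, in particular an optimal one, ships from the FDC during the periods
  of \<open>B\<close> at most the demand arising in \<open>B\<close> and at most the initial inventory.
  Conversely, under an all-or-nothing policy the quantities \<open>hat_m\<close> summed over any \<open>B\<close>
  containing all shipping periods reach this minimum: going forward in time, either every
  period of \<open>B\<close> so far was served in full, or at the last period of \<open>B\<close> that was not, \<open>hat_m\<close>
  equals the remaining inventory, and the shipments before it (all inside \<open>B\<close>, each equal
  to its \<open>hat_m\<close>) make up the rest of the initial inventory.\<close>

definition all_or_nothing ::
  "nat \<Rightarrow> (nat \<Rightarrow> nat) \<Rightarrow> (nat \<Rightarrow> nat \<Rightarrow> nat) \<Rightarrow> (nat \<Rightarrow> nat \<Rightarrow> nat \<Rightarrow> nat) \<Rightarrow> nat \<Rightarrow> bool" where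
  "all_or_nothing T I0 S m i \<longleftrightarrow>
     (\<forall>t\<in>{1..T}. m 1 t i = 0 \<or> int (m 1 t i) = hat_m I0 S m t i)"

lemma all_or_nothing_Suc_imp: "all_or_nothing (Suc T) I0 S m i \<Longrightarrow> all_or_nothing T I0 S m i"
  by (auto simp: all_or_nothing_def)

lemma fdc_inv_0 [simp]: "fdc_inv I0 m 0 i = int (I0 i)"
  by (simp add: fdc_inv_def)

lemma fdc_inv_Suc: "fdc_inv I0 m (Suc t) i = fdc_inv I0 m t i - int (m 1 (Suc t) i)"
  by (simp add: fdc_inv_def)

lemma all_or_nothing_fdc_inv_nonneg:
  assumes "all_or_nothing T I0 S m i" and "t \<le> T"
  shows "0 \<le> fdc_inv I0 m t i"
  using assms(2)
proof (induction t)
  case 0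
  then show ?case by simp
next
  case (Suc t)
  have "m 1 (Suc t) i = 0 \<or> int (m 1 (Suc t) i) = hat_m I0 S m (Suc t) i"
    using assms(1) Suc.prems by (simp add: all_or_nothing_def)
  moreover have "hat_m I0 S m (Suc t) i \<le> fdc_inv I0 m t i"
    by (simp add: hat_m_def)
  ultimately show ?case
    using Suc by (auto simp: fdc_inv_Suc)
qed

lemma all_or_nothing_hat_m_nonneg:
  assumes "all_or_nothing T I0 S m i" and "t \<in> {1..T}"
  shows "0 \<le> hat_m I0 S m t i"
proof -
  have "t - 1 \<le> T"
    using assms(2) by auto
  then show ?thesis
    using all_or_nothing_fdc_inv_nonneg[OF assms(1)] by (simp add: hat_m_def)
qed

lemma all_or_nothing_shipment_eq_hat_m:
  assumes "all_or_nothing T I0 S m i" and "t \<in> {1..T}" and "0 < m 1 t i"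
  shows "int (m 1 t i) = hat_m I0 S m t i"
proof -
  have "m 1 t i = 0 \<or> int (m 1 t i) = hat_m I0 S m t i"
    using assms(1,2) unfolding all_or_nothing_def by blast
  then show ?thesis
    using assms(3) by simp
qed

lemma all_or_nothing_shipped_le_sum_hat_m:
  assumes aon: "all_or_nothing T I0 S m i"
    and B: "B \<subseteq> {1..T}" and CB: "{t \<in> {1..T}. 0 < m 1 t i} \<subseteq> B"
  shows "(\<Sum>t\<in>{1..T}. int (m 1 t i)) \<le> (\<Sum>t\<in>B. hat_m I0 S m t i)"
proof -
  let ?C = "{t \<in> {1..T}. 0 < m 1 t i}"
  have "(\<Sum>t\<in>{1..T}. int (m 1 t i)) = (\<Sum>t\<in>?C. int (m 1 t i))"
    by (rule sum.mono_neutral_right) auto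
  also have "\<dots> = (\<Sum>t\<in>?C. hat_m I0 S m t i)"
    using all_or_nothing_shipment_eq_hat_m[OF aon] by (intro sum.cong) auto
  also have "\<dots> \<le> (\<Sum>t\<in>B. hat_m I0 S m t i)"
    using B CB all_or_nothing_hat_m_nonneg[OF aon]
    by (intro sum_mono2) (auto intro: finite_subset)
  finally show ?thesis .
qed

lemma all_or_nothing_sum_hat_m_ge:
  assumes "all_or_nothing T I0 S m i"
    and "B \<subseteq> {1..T}" and "{t \<in> {1..T}. 0 < m 1 t i} \<subseteq> B"
  shows "min (int (\<Sum>t\<in>B. S t i)) (int (I0 i)) \<le> (\<Sum>t\<in>B. hat_m I0 S m t i)"
  using assms
proof (induction T arbitrary: B)
  case 0
  then show ?case by simp
next
  case (Suc T)
  show ?case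
  proof (cases "Suc T \<in> B")
    case False
    then have "B \<subseteq> {1..T}"
      using Suc.prems(2) by (auto simp: le_Suc_eq)
    moreover have "{t \<in> {1..T}. 0 < m 1 t i} \<subseteq> B"
      using Suc.prems(3) by auto
    ultimately show ?thesis
      using Suc.IH all_or_nothing_Suc_imp[OF Suc.prems(1)] by blast
  next
    case True
    define B0 where "B0 = B - {Suc T}"
    have B0: "B0 \<subseteq> {1..T}" "{t \<in> {1..T}. 0 < m 1 t i} \<subseteq> B0"
      using Suc.prems(2,3) by (auto simp: B0_def le_Suc_eq)
    have aon: "all_or_nothing T I0 S m i"
      using Suc.prems(1) by (rule all_or_nothing_Suc_imp)
    have B_eq: "B = insert (Suc T) B0" "Suc T \<notin> B0"
      using True by (auto simp: B0_def)
    have "finite B0"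
      using B0(1) by (rule finite_subset) simp
    define shipped where "shipped = (\<Sum>t\<in>{1..T}. int (m 1 t i))"
    have "min (int (\<Sum>t\<in>B0. S t i)) (int (I0 i)) \<le> (\<Sum>t\<in>B0. hat_m I0 S m t i)"
      using Suc.IH[OF aon B0] .
    moreover have "shipped \<le> (\<Sum>t\<in>B0. hat_m I0 S m t i)"
      unfolding shipped_def using all_or_nothing_shipped_le_sum_hat_m[OF aon B0] .
    moreover have "hat_m I0 S m (Suc T) i = min (int (S (Suc T) i)) (int (I0 i) - shipped)"
      by (simp add: hat_m_def fdc_inv_def shipped_def)
    moreover have "(\<Sum>t\<in>B. hat_m I0 S m t i)
        = (\<Sum>t\<in>B0. hat_m I0 S m t i) + hat_m I0 S m (Suc T) i"
      and "int (\<Sum>t\<in>B. S t i) = int (\<Sum>t\<in>B0. S t i) + int (S (Suc T) i)"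
      using B_eq \<open>finite B0\<close> by simp_all
    ultimately show ?thesis
      by linarith
  qed
qed

lemma feasible_plan_sum_fdc_le:
  assumes feas: "feasible_plan n T I0 S m" and i: "i \<in> {1..n}" and B: "B \<subseteq> {1..T}"
  shows "(\<Sum>t\<in>B. m 1 t i) \<le> min (\<Sum>t\<in>B. S t i) (I0 i)"
proof -
  have "(\<Sum>t\<in>B. m 1 t i) \<le> (\<Sum>t\<in>B. S t i)"
  proof (rule sum_mono)
    fix t assume "t \<in> B"
    then have "m 0 t i + m 1 t i = S t i"
      using feas i B by (auto simp: feasible_plan_def)
    then show "m 1 t i \<le> S t i" by linarith
  qed
  moreover have "(\<Sum>t\<in>B. m 1 t i) \<le> I0 i"
  proof (cases "T = 0")
    case True
    then show ?thesis using B by simp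
  next
    case False
    have "(\<Sum>t\<in>B. m 1 t i) \<le> (\<Sum>t\<in>{1..T}. m 1 t i)"
      using B by (intro sum_mono2) auto
    also have "\<dots> \<le> I0 i"
      using feas i False by (simp add: feasible_plan_def)
    finally show ?thesis .
  qed
  ultimately show ?thesis by simp
qed

theorem mainTheorem13:
  fixes n T :: nat and I0 :: "nat \<Rightarrow> nat" and S :: "nat \<Rightarrow> nat \<Rightarrow> nat"
    and f :: "nat \<Rightarrow> real" and c :: "nat \<Rightarrow> nat \<Rightarrow> nat \<Rightarrow> real"
    and m mstar :: "nat \<Rightarrow> nat \<Rightarrow> nat \<Rightarrow> nat" and i :: nat and B :: "nat set"
  assumes feas: "feasible_plan n T I0 S m"
    and allnone: "\<forall>j\<in>{1..n}. \<forall>t\<in>{1..T}. int (m 1 t j) = hat_m I0 S m t j \<or> m 1 t j = 0"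
    and opt: "optimal_offline_plan n T I0 S f c mstar"
    and i: "i \<in> {1..n}"
    and B: "B \<subseteq> {1..T}"
    and CB: "{t \<in> {1..T}. m 1 t i > 0} \<subseteq> B"
  shows "(\<Sum>t\<in>B. hat_m I0 S m t i) \<ge> (\<Sum>t\<in>B. int (mstar 1 t i))"
proof -
  have "feasible_plan n T I0 S mstar"
    using opt by (simp add: optimal_offline_plan_def)
  then have "(\<Sum>t\<in>B. mstar 1 t i) \<le> min (\<Sum>t\<in>B. S t i) (I0 i)"
    using i B by (rule feasible_plan_sum_fdc_le)
  then have "(\<Sum>t\<in>B. int (mstar 1 t i)) \<le> min (int (\<Sum>t\<in>B. S t i)) (int (I0 i))"
    by (simp flip: of_nat_sum)
  also have "\<dots> \<le> (\<Sum>t\<in>B. hat_m I0 S m t i)"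
  proof (rule all_or_nothing_sum_hat_m_ge)
    show "all_or_nothing T I0 S m i"
      using allnone i by (auto simp: all_or_nothing_def)
  qed (use B CB in auto)
  finally show ?thesis .
qed

end
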